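(* There exists a unique algebra homomorphism $\widetilde\natural:\mathcal H_q\to\mathfrak{W}_q$ sending $A\mapsto K_2^{-1}$, $B\mapsto \widetilde\Delta(\Lambda)=(q-q^{-1})^2(E_1+K_1^{-1}E_2)(F_1K_2+F_2)+q^{-1}K_1K_2+qK_1^{-1}K_2^{-1}$, and $C\mapsto IK_1^{-1}-q(q-q^{-1})^2E_1F_2K_2^{-1}$. Moreover $\widetilde\natural(\alpha)=\Lambda_2+\Lambda_1K_1^{-1}K_2^{-1}$, $\widetilde\natural(\beta)=IK_1^{-1}K_2^{-1}$ and $\widetilde\natural(\gamma)=\Lambda_1+\Lambda_2K_1^{-1}K_2^{-1}$.
   Context: Throughout, $q$ is a nonzero complex number that is not a root of unity; $[x,y]=xy-yx$ and $[x,y]_q=qxy-q^{-1}yx$. $\mathfrak{W}_q$ is the algebra over $\mathbb C$ generated by $E_1,E_2,F_1,F_2,K_1^{\pm1},K_2^{\pm1},I^{\pm1}$ subject to: $I$ is central; $II^{-1}=I^{-1}I=1$, $K_1K_1^{-1}=K_1^{-1}K_1=1$, $K_2K_2^{-1}=K_2^{-1}K_2=1$; $[K_1,E_2]=[K_1,F_2]=[K_1,K_2]=[K_2,E_1]=[K_2,F_1]=0$; $[E_1,K_1]_q=[K_1,F_1]_q=[E_2,K_2]_q=[K_2,F_2]_q=0$; $[E_1,E_2]=[E_1,F_2]=[F_1,E_2]=[F_1,F_2]=0$; $[E_1,F_1]=\frac{K_1-IK_1^{-1}}{q-q^{-1}}$; $[E_2,F_2]=\frac{IK_2-K_2^{-1}}{q-q^{-1}}$.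 $\Lambda_1=(q-q^{-1})^2E_1F_1+q^{-1}K_1+qIK_1^{-1}$, $\Lambda_2=(q-q^{-1})^2E_2F_2+q^{-1}IK_2+qK_2^{-1}$. The universal $q$-Hahn algebra $\mathcal H_q$ is the algebra over $\mathbb C$ generated by $A,B,C$ subject to the relations that each of $\frac{[B,C]_q}{q^2-q^{-2}}+A$, $[C,A]_q$, $\frac{[A,B]_q}{q^2-q^{-2}}+C$ commutes with $A,B,C$. Its central elements $\alpha,\beta,\gamma$ are $\alpha=\frac{[B,C]_q}{q-q^{-1}}+(q+q^{-1})A$, $\beta=\frac{[C,A]_q}{q-q^{-1}}$, $\gamma=\frac{[A,B]_q}{q-q^{-1}}+(q+q^{-1})C$. *)

theory Defs
  imports Complex_Main "HOL-Algebra.QuotRing" "HOL-Library.Poly_Mapping"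
begin

datatype 'g word = Word "'g list"

instantiation word :: (type) monoid_add
begin
definition zero_word :: "'g word" where "zero_word = Word []"
fun plus_word :: "'g word \<Rightarrow> 'g word \<Rightarrow> 'g word" where
  "plus_word (Word a) (Word b) = Word (a @ b)"
instance
proof
  fix a b c :: "'g word"
  show "a + b + c = a + (b + c)" by (cases a; cases b; cases c) simp
  show "0 + a = a" by (cases a) (simp add: zero_word_def)
  show "a + 0 = a" by (cases a) (simp add: zero_word_def)
qed
end

text \<open>The free algebra: finitely supported complex functions on words,
  with convolution product (noncommutative polynomials).\<close>

type_synonym 'g freealg = "'g word \<Rightarrow>\<^sub>0 complex"

definition gen :: "'g \<Rightarrow> 'g freealg" where
  "gen x = Poly_Mapping.single (Word [x]) 1"

definition cst :: "complex \<Rightarrow> 'g freealg" where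
  "cst c = Poly_Mapping.single 0 c"

definition FreeRing :: "'g freealg ring" where
  "FreeRing = \<lparr>carrier = UNIV, mult = (*), one = 1, zero = 0, add = (+)\<rparr>"

definition comm :: "'g freealg \<Rightarrow> 'g freealg \<Rightarrow> 'g freealg" where
  "comm x y = x * y - y * x"

definition qcomm :: "complex \<Rightarrow> 'g freealg \<Rightarrow> 'g freealg \<Rightarrow> 'g freealg" where
  "qcomm q x y = cst q * x * y - cst (inverse q) * y * x"

datatype genW = E1 | E2 | F1 | F2 | K1 | K1i | K2 | K2i | II | IIi

text \<open>Each relation r is imposed as r = 0.  K1i, K2i, IIi stand for the inverses.\<close>

definition relsW :: "complex \<Rightarrow> genW freealg set" where
  "relsW q =
     {comm (gen II) (gen x) | x. True}
   \<union> { gen II * gen IIi - 1, gen IIi * gen II - 1,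
       gen K1 * gen K1i - 1, gen K1i * gen K1 - 1,
       gen K2 * gen K2i - 1, gen K2i * gen K2 - 1,
       comm (gen K1) (gen E2), comm (gen K1) (gen F2), comm (gen K1) (gen K2),
       comm (gen K2) (gen E1), comm (gen K2) (gen F1),
       qcomm q (gen E1) (gen K1), qcomm q (gen K1) (gen F1),
       qcomm q (gen E2) (gen K2), qcomm q (gen K2) (gen F2),
       comm (gen E1) (gen E2), comm (gen E1) (gen F2),
       comm (gen F1) (gen E2), comm (gen F1) (gen F2),
       comm (gen E1) (gen F1) - cst (inverse (q - inverse q)) * (gen K1 - gen II * gen K1i),
       comm (gen E2) (gen F2) - cst (inverse (q - inverse q)) * (gen II * gen K2 - gen K2i) }"

definition Wq :: "complex \<Rightarrow> genW freealg set ring" where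
  "Wq q = FreeRing Quot (genideal FreeRing (relsW q))"

definition clsW :: "complex \<Rightarrow> genW freealg \<Rightarrow> genW freealg set" where
  "clsW q x = a_r_coset FreeRing (genideal FreeRing (relsW q)) x"

definition Lambda1 :: "complex \<Rightarrow> genW freealg" where
  "Lambda1 q = cst ((q - inverse q)^2) * gen E1 * gen F1 + cst (inverse q) * gen K1
               + cst q * gen II * gen K1i"

definition Lambda2 :: "complex \<Rightarrow> genW freealg" where
  "Lambda2 q = cst ((q - inverse q)^2) * gen E2 * gen F2 + cst (inverse q) * gen II * gen K2
               + cst q * gen K2i"

datatype genH = GA | GB | GC

definition relsH :: "complex \<Rightarrow> genH freealg set" where
  "relsH q =
     (\<Union>X\<in>{gen GA, gen GB, gen GC}.
        { comm (cst (inverse (q^2 - inverse (q^2))) * qcomm q (gen GB) (gen GC) + gen GA) X,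
          comm (qcomm q (gen GC) (gen GA)) X,
          comm (cst (inverse (q^2 - inverse (q^2))) * qcomm q (gen GA) (gen GB) + gen GC) X })"

definition Hq :: "complex \<Rightarrow> genH freealg set ring" where
  "Hq q = FreeRing Quot (genideal FreeRing (relsH q))"

definition clsH :: "complex \<Rightarrow> genH freealg \<Rightarrow> genH freealg set" where
  "clsH q x = a_r_coset FreeRing (genideal FreeRing (relsH q)) x"

definition alphaH :: "complex \<Rightarrow> genH freealg" where
  "alphaH q = cst (inverse (q - inverse q)) * qcomm q (gen GB) (gen GC) + cst (q + inverse q) * gen GA"

definition betaH :: "complex \<Rightarrow> genH freealg" where
  "betaH q = cst (inverse (q - inverse q)) * qcomm q (gen GC) (gen GA)"

definition gammaH :: "complex \<Rightarrow> genH freealg" where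
  "gammaH q = cst (inverse (q - inverse q)) * qcomm q (gen GA) (gen GB) + cst (q + inverse q) * gen GC"

text \<open>A complex-algebra homomorphism: a unital ring homomorphism that is
  complex-linear, i.e. maps the scalar c\<cdot>1 to c\<cdot>1.\<close>

definition alg_hom_HW :: "complex \<Rightarrow> (genH freealg set \<Rightarrow> genW freealg set) \<Rightarrow> bool" where
  "alg_hom_HW q f \<longleftrightarrow> f \<in> ring_hom (Hq q) (Wq q) \<and> (\<forall>c. f (clsH q (cst c)) = clsW q (cst c))"

end

theory Submission
  imports Defs
begin

text \<open>Write \<open>a, b, c\<close> for the proposed images of \<open>A, B, C\<close> and \<open>\<alpha>', \<beta>', \<gamma>'\<close> for the
  proposed images of \<open>\<alpha>, \<beta>, \<gamma>\<close>.  The heart of the proof is a computation in \<open>\<W>\<^sub>q\<close>: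
  \<open>[b,c]\<^sub>q = (q - q\<^sup>-\<^sup>1)(\<alpha>' - (q + q\<^sup>-\<^sup>1) a)\<close>, \<open>[c,a]\<^sub>q = (q - q\<^sup>-\<^sup>1) \<beta>'\<close>,
  \<open>[a,b]\<^sub>q = (q - q\<^sup>-\<^sup>1)(\<gamma>' - (q + q\<^sup>-\<^sup>1) c)\<close>, and \<open>\<alpha>', \<beta>', \<gamma>'\<close> commute with \<open>a, b, c\<close>.
  This gives at once the defining relations of \<open>\<H>\<^sub>q\<close> for \<open>a, b, c\<close> and the images of the
  central elements; existence then follows from the universal properties of the free algebra and
  of the quotient, uniqueness from generation of \<open>\<H>\<^sub>q\<close> by \<open>A, B, C\<close> and scalars.

  Since \<open>E\<^sub>i\<close> and \<open>F\<^sub>i\<close> only occur multiplied by \<open>q - q\<^sup>-\<^sup>1\<close>, we rescale them by this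
  factor; the relations then lose the denominator \<open>q - q\<^sup>-\<^sup>1\<close> and the computation is
  rewriting of monomials into a normal order.  As \<open>\<W>\<^sub>q\<close> is not a type, this rewriting is done
  in the ring of families \<open>q \<mapsto> x\<^sub>q\<close> of free-algebra elements, identified when they agree in
  \<open>\<W>\<^sub>q\<close> for every \<open>q\<close> that is nonzero and not a root of unity.\<close>

section \<open>Abstract rings satisfying the relations of \<open>\<W>\<^sub>q\<close>\<close>

lemma mult_assoc_rule: "(a::'a::semigroup_mult) * b = c \<Longrightarrow> a * (b * z) = c * z"
  by (simp add: mult.assoc[symmetric])

lemma commute_inverse_twisted:
  fixes K Ki X c :: "'a::{ring,monoid_mult}"
  assumes "K * Ki = 1" "Ki * K = 1" "X * K = c * (K * X)" "\<And>y. c * y = y * c"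
  shows "Ki * X = c * (X * Ki)"
proof -
  have "Ki * X = Ki * (X * K) * Ki" using assms(1) by (simp add: mult.assoc)
  also have "\<dots> = Ki * (K * X) * Ki * c" using assms(3,4) by (simp add: mult.assoc)
  also have "\<dots> = X * Ki * c" using assms(2) by (simp add: mult.assoc[symmetric])
  finally show ?thesis using assms(4) by (simp add: mult.assoc)
qed

lemma commute_inverse:
  fixes K Ki X :: "'a::{ring,monoid_mult}"
  shows "K * Ki = 1 \<Longrightarrow> Ki * K = 1 \<Longrightarrow> X * K = K * X \<Longrightarrow> Ki * X = X * Ki"
  using commute_inverse_twisted[of K Ki X 1] by simp

lemma central_mult_commute:
  fixes c y X :: "'a::{ring,monoid_mult}"
  assumes "\<And>x. c * x = x * c" "y * X = X * y"
  shows "(c * y) * X - X * (c * y) = 0"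
proof -
  have "(c * y) * X = c * (X * y)" using assms(2) by (simp add: mult.assoc)
  also have "\<dots> = X * (c * y)" using assms(1)[of X] by (metis mult.assoc)
  finally show ?thesis by simp
qed

lemma rescaled_difference_commute:
  fixes R d s X Y Z W :: "'a::{ring,monoid_mult}"
  assumes "\<And>x. R * x = x * R" "R * (d * s) = 1" "Y = d * (Z - s * X)"
    and "d * W = W * d" "Z * W = W * Z"
  shows "(R * Y + X) * W - W * (R * Y + X) = 0"
proof -
  have "R * Y + X = (R * d) * Z - (R * (d * s)) * X + X"
    unfolding assms(3) by (simp add: algebra_simps)
  also have "\<dots> = R * (d * Z)" using assms(2) by (simp add: mult.assoc)
  finally have "R * Y + X = R * (d * Z)" .
  moreover have "(d * Z) * W = W * (d * Z)"
    using assms(4,5) by (metis mult.assoc)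
  ultimately show ?thesis using central_mult_commute[of R "d * Z" W] assms(1) by simp
qed

text \<open>The relations of \<open>\<W>\<^sub>q\<close> for the rescaled generators \<open>(q - q\<^sup>-\<^sup>1) E\<^sub>i\<close>, \<open>(q - q\<^sup>-\<^sup>1) F\<^sub>i\<close>;
  \<open>Q\<close> and \<open>Qi\<close> play the role of the scalars \<open>q\<close> and \<open>q\<^sup>-\<^sup>1\<close>.\<close>

locale wq_scaled =
  fixes E1 F1 E2 F2 K1 K1i K2 K2i I Q Qi :: "'a::{ring,monoid_mult}"
  assumes Qc: "\<And>x. x * Q = Q * x" and Qic: "\<And>x. x * Qi = Qi * x" and QQi: "Q * Qi = 1"
  and IE1: "E1 * I = I * E1" and IF1: "F1 * I = I * F1" and IE2: "E2 * I = I * E2" and IF2: "F2 * I = I * F2"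
  and IK1: "K1 * I = I * K1" and IK1i: "K1i * I = I * K1i" and IK2: "K2 * I = I * K2" and IK2i: "K2i * I = I * K2i"
  and K1K1i: "K1 * K1i = 1" and K1iK1: "K1i * K1 = 1" and K2K2i: "K2 * K2i = 1" and K2iK2: "K2i * K2 = 1"
  and K1E2: "K1 * E2 = E2 * K1" and K1F2: "K1 * F2 = F2 * K1" and K1K2: "K1 * K2 = K2 * K1"
  and K2E1: "K2 * E1 = E1 * K2" and K2F1: "K2 * F1 = F1 * K2"
  and E1K1: "Q * (E1 * K1) = Qi * (K1 * E1)" and K1F1: "Q * (K1 * F1) = Qi * (F1 * K1)"
  and E2K2: "Q * (E2 * K2) = Qi * (K2 * E2)" and K2F2: "Q * (K2 * F2) = Qi * (F2 * K2)"
  and E1E2: "E1 * E2 = E2 * E1" and E1F2: "E1 * F2 = F2 * E1" and F1E2: "F1 * E2 = E2 * F1" and F1F2: "F1 * F2 = F2 * F1"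
  and EF1: "E1 * F1 - F1 * E1 = (Q - Qi) * (K1 - I * K1i)"
  and EF2: "E2 * F2 - F2 * E2 = (Q - Qi) * (I * K2 - K2i)"
begin

lemma QiQ: "Qi * Q = 1" using QQi Qic by metis

lemma QQ_central: "(Q * Q) * y = y * (Q * Q)" by (metis Qc mult.assoc)
lemma QiQi_central: "(Qi * Qi) * y = y * (Qi * Qi)" by (metis Qic mult.assoc)
lemma Qdiff_central: "(Q - Qi) * x = x * (Q - Qi)" by (simp add: algebra_simps Qc Qic)

lemma qcomm_zero_swap: "Q * (a * b) = Qi * (b * a) \<Longrightarrow> b * a = Q * Q * (a * b)"
  by (metis QQi mult.assoc mult_1)

lemma qcomm_zero_swap': "Q * (a * b) = Qi * (b * a) \<Longrightarrow> a * b = Qi * Qi * (b * a)"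
  by (metis QiQ mult.assoc mult_1)

lemma swap_K1_E1: "K1 * E1 = Q * Q * (E1 * K1)" by (rule qcomm_zero_swap[OF E1K1])
lemma swap_K1_F1: "K1 * F1 = Qi * Qi * (F1 * K1)" by (rule qcomm_zero_swap'[OF K1F1])
lemma swap_K2_E2: "K2 * E2 = Q * Q * (E2 * K2)" by (rule qcomm_zero_swap[OF E2K2])
lemma swap_K2_F2: "K2 * F2 = Qi * Qi * (F2 * K2)" by (rule qcomm_zero_swap'[OF K2F2])

lemma swap_K1i_E1: "K1i * E1 = Qi * Qi * (E1 * K1i)"
  by (rule commute_inverse_twisted[OF K1K1i K1iK1 _ QiQi_central])
     (simp add: swap_K1_E1 mult.assoc QiQ[THEN mult_assoc_rule])
lemma swap_K1i_F1: "K1i * F1 = Q * Q * (F1 * K1i)"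
  by (rule commute_inverse_twisted[OF K1K1i K1iK1 _ QQ_central])
     (simp add: swap_K1_F1 mult.assoc QQi[THEN mult_assoc_rule])
lemma swap_K2i_E2: "K2i * E2 = Qi * Qi * (E2 * K2i)"
  by (rule commute_inverse_twisted[OF K2K2i K2iK2 _ QiQi_central])
     (simp add: swap_K2_E2 mult.assoc QiQ[THEN mult_assoc_rule])
lemma swap_K2i_F2: "K2i * F2 = Q * Q * (F2 * K2i)"
  by (rule commute_inverse_twisted[OF K2K2i K2iK2 _ QQ_central])
     (simp add: swap_K2_F2 mult.assoc QQi[THEN mult_assoc_rule])

lemma swap_K1i_E2: "K1i * E2 = E2 * K1i" by (rule commute_inverse[OF K1K1i K1iK1 K1E2[symmetric]])
lemma swap_K1i_F2: "K1i * F2 = F2 * K1i" by (rule commute_inverse[OF K1K1i K1iK1 K1F2[symmetric]])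
lemma swap_K2i_E1: "K2i * E1 = E1 * K2i" by (rule commute_inverse[OF K2K2i K2iK2 K2E1[symmetric]])
lemma swap_K2i_F1: "K2i * F1 = F1 * K2i" by (rule commute_inverse[OF K2K2i K2iK2 K2F1[symmetric]])
lemma swap_K2_K1i: "K2 * K1i = K1i * K2" by (rule commute_inverse[OF K1K1i K1iK1 K1K2[symmetric], symmetric])
lemma swap_K2i_K1: "K2i * K1 = K1 * K2i" by (rule commute_inverse[OF K2K2i K2iK2 K1K2])
lemma swap_K2i_K1i: "K2i * K1i = K1i * K2i" by (rule commute_inverse[OF K2K2i K2iK2 swap_K2_K1i[symmetric]])

lemma swap_F1_E1: "F1 * E1 = E1 * F1 - (Q - Qi) * (K1 - K1i * I)"
  using EF1 IK1i by (simp add: algebra_simps)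
lemma swap_F2_E2: "F2 * E2 = E2 * F2 - (Q - Qi) * (K2 * I - K2i)"
  using EF2 IK2 by (simp add: algebra_simps)

text \<open>An oriented rewrite system bringing monomials into the normal order
  scalars, \<open>E\<^sub>1, E\<^sub>2, F\<^sub>1, F\<^sub>2, K\<^sub>1\<^sup>\<plusminus>\<^sup>1, K\<^sub>2\<^sup>\<plusminus>\<^sup>1, I\<close>.  Since \<open>simp\<close> associates products to the
  right, each rule \<open>a * b = c\<close> is also needed in the form \<open>a * (b * z) = c * z\<close>.\<close>

lemmas normal_order_rules = swap_K1_E1 swap_K1_F1 swap_K2_E2 swap_K2_F2
  swap_K1i_E1 swap_K1i_F1 swap_K2i_E2 swap_K2i_F2
  swap_K1i_E2 swap_K1i_F2 swap_K2i_E1 swap_K2i_F1 swap_K2_K1i swap_K2i_K1 swap_K2i_K1i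
  swap_F1_E1 swap_F2_E2
  E1E2[symmetric] E1F2[symmetric] F1E2[symmetric] F1F2[symmetric]
  K1E2 K1F2 K1K2[symmetric] K2E1 K2F1 K1K1i K1iK1 K2K2i K2iK2
  IE1[symmetric] IF1[symmetric] IE2[symmetric] IF2[symmetric]
  IK1[symmetric] IK1i[symmetric] IK2[symmetric] IK2i[symmetric]
  QQi QiQ
  Qc[of E1] Qc[of F1] Qc[of E2] Qc[of F2] Qc[of K1] Qc[of K1i] Qc[of K2] Qc[of K2i] Qc[of I]
  Qic[of E1] Qic[of F1] Qic[of E2] Qic[of F2] Qic[of K1] Qic[of K1i] Qic[of K2] Qic[of K2i] Qic[of I]
  Qic[of Q, symmetric]

lemmas normal_order = normal_order_rules normal_order_rules[THEN mult_assoc_rule]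

definition "imgA = K2i"
definition "imgB = (E1 + K1i * E2) * (F1 * K2 + F2) + Qi * K1 * K2 + Q * K1i * K2i"
definition "imgC = I * K1i - Q * E1 * F2 * K2i"
definition "Lam1 = E1 * F1 + Qi * K1 + Q * I * K1i"
definition "Lam2 = E2 * F2 + Qi * I * K2 + Q * K2i"
definition "img_alpha = Lam2 + Lam1 * K1i * K2i"
definition "img_beta = I * K1i * K2i"
definition "img_gamma = Lam1 + Lam2 * K1i * K2i"

lemma qcomm_imgB_imgC: "Q * imgB * imgC - Qi * imgC * imgB = (Q - Qi) * (img_alpha - (Q + Qi) * imgA)"
  unfolding imgA_def imgB_def imgC_def img_alpha_def Lam1_def Lam2_def
  by (simp add: algebra_simps normal_order)

lemma qcomm_imgC_imgA: "Q * imgC * imgA - Qi * imgA * imgC = (Q - Qi) * img_beta"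
  unfolding imgA_def imgC_def img_beta_def by (simp add: algebra_simps normal_order)

lemma qcomm_imgA_imgB: "Q * imgA * imgB - Qi * imgB * imgA = (Q - Qi) * (img_gamma - (Q + Qi) * imgC)"
  unfolding imgA_def imgB_def imgC_def img_gamma_def Lam1_def Lam2_def
  by (simp add: algebra_simps normal_order)

lemma img_alpha_commute:
  "img_alpha * imgA = imgA * img_alpha" "img_alpha * imgB = imgB * img_alpha" "img_alpha * imgC = imgC * img_alpha"
  unfolding imgA_def imgB_def imgC_def img_alpha_def Lam1_def Lam2_def by (simp_all add: algebra_simps normal_order)

lemma img_beta_commute:
  "img_beta * imgA = imgA * img_beta" "img_beta * imgB = imgB * img_beta" "img_beta * imgC = imgC * img_beta"
  unfolding imgA_def imgB_def imgC_def img_beta_def by (simp_all add: algebra_simps normal_order)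

lemma img_gamma_commute:
  "img_gamma * imgA = imgA * img_gamma" "img_gamma * imgB = imgB * img_gamma" "img_gamma * imgC = imgC * img_gamma"
  unfolding imgA_def imgB_def imgC_def img_gamma_def Lam1_def Lam2_def by (simp_all add: algebra_simps normal_order)


lemma hahn_relations:
  assumes R: "\<And>x. R * x = x * R" "R * ((Q - Qi) * (Q + Qi)) = 1" and X: "X \<in> {imgA, imgB, imgC}"
  shows "(R * (Q * imgB * imgC - Qi * imgC * imgB) + imgA) * X
          - X * (R * (Q * imgB * imgC - Qi * imgC * imgB) + imgA) = 0"
    and "(Q * imgC * imgA - Qi * imgA * imgC) * X - X * (Q * imgC * imgA - Qi * imgA * imgC) = 0"
    and "(R * (Q * imgA * imgB - Qi * imgB * imgA) + imgC) * X
          - X * (R * (Q * imgA * imgB - Qi * imgB * imgA) + imgC) = 0"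
proof -
  have alpha: "img_alpha * X = X * img_alpha" and beta: "img_beta * X = X * img_beta"
    and gamma: "img_gamma * X = X * img_gamma"
    using X img_alpha_commute img_beta_commute img_gamma_commute by auto
  show "(R * (Q * imgB * imgC - Qi * imgC * imgB) + imgA) * X
          - X * (R * (Q * imgB * imgC - Qi * imgC * imgB) + imgA) = 0"
    by (rule rescaled_difference_commute[OF R qcomm_imgB_imgC Qdiff_central alpha])
  show "(Q * imgC * imgA - Qi * imgA * imgC) * X - X * (Q * imgC * imgA - Qi * imgA * imgC) = 0"
    unfolding qcomm_imgC_imgA by (rule central_mult_commute[OF Qdiff_central beta])
  show "(R * (Q * imgA * imgB - Qi * imgB * imgA) + imgC) * X
          - X * (R * (Q * imgA * imgB - Qi * imgB * imgA) + imgC) = 0"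
    by (rule rescaled_difference_commute[OF R qcomm_imgA_imgB Qdiff_central gamma])
qed

lemma central_images:
  assumes Ai: "Ai * (Q - Qi) = 1"
  shows "Ai * (Q * imgB * imgC - Qi * imgC * imgB) + (Q + Qi) * imgA = img_alpha"
    and "Ai * (Q * imgC * imgA - Qi * imgA * imgC) = img_beta"
    and "Ai * (Q * imgA * imgB - Qi * imgB * imgA) + (Q + Qi) * imgC = img_gamma"
proof -
  have rescale: "Ai * ((Q - Qi) * y) = y" for y
    by (simp add: mult.assoc[symmetric] Ai)
  show "Ai * (Q * imgB * imgC - Qi * imgC * imgB) + (Q + Qi) * imgA = img_alpha"
    unfolding qcomm_imgB_imgC rescale by simp
  show "Ai * (Q * imgC * imgA - Qi * imgA * imgC) = img_beta"
    unfolding qcomm_imgC_imgA rescale by simp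
  show "Ai * (Q * imgA * imgB - Qi * imgB * imgA) + (Q + Qi) * imgC = img_gamma"
    unfolding qcomm_imgA_imgB rescale by simp
qed

end

text \<open>The relations of \<open>\<W>\<^sub>q\<close> themselves, with \<open>Ai\<close> standing for \<open>(q - q\<^sup>-\<^sup>1)\<^sup>-\<^sup>1\<close>.\<close>

locale wq =
  fixes E1 F1 E2 F2 K1 K1i K2 K2i I Q Qi Ai :: "'a::{ring,monoid_mult}"
  assumes Qc: "\<And>x. x * Q = Q * x" and Qic: "\<And>x. x * Qi = Qi * x" and QQi: "Q * Qi = 1"
  and QAi: "(Q - Qi) * Ai = 1"
  and IE1: "I * E1 = E1 * I" and IF1: "I * F1 = F1 * I" and IE2: "I * E2 = E2 * I" and IF2: "I * F2 = F2 * I"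
  and IK1: "I * K1 = K1 * I" and IK1i: "I * K1i = K1i * I" and IK2: "I * K2 = K2 * I" and IK2i: "I * K2i = K2i * I"
  and K1K1i: "K1 * K1i = 1" and K1iK1: "K1i * K1 = 1" and K2K2i: "K2 * K2i = 1" and K2iK2: "K2i * K2 = 1"
  and K1E2: "K1 * E2 = E2 * K1" and K1F2: "K1 * F2 = F2 * K1" and K1K2: "K1 * K2 = K2 * K1"
  and K2E1: "K2 * E1 = E1 * K2" and K2F1: "K2 * F1 = F1 * K2"
  and E1K1: "Q * E1 * K1 = Qi * K1 * E1" and K1F1: "Q * K1 * F1 = Qi * F1 * K1"
  and E2K2: "Q * E2 * K2 = Qi * K2 * E2" and K2F2: "Q * K2 * F2 = Qi * F2 * K2"
  and E1E2: "E1 * E2 = E2 * E1" and E1F2: "E1 * F2 = F2 * E1" and F1E2: "F1 * E2 = E2 * F1" and F1F2: "F1 * F2 = F2 * F1"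
  and EF1: "E1 * F1 - F1 * E1 = Ai * (K1 - I * K1i)"
  and EF2: "E2 * F2 - F2 * E2 = Ai * (I * K2 - K2i)"
begin

lemma Qdiff_commute: "x * ((Q - Qi) * y) = (Q - Qi) * (x * y)"
proof -
  have "x * (Q - Qi) = (Q - Qi) * x" by (simp add: algebra_simps Qc Qic)
  then show ?thesis by (metis mult.assoc)
qed

lemmas Qdiff_commutes = Qdiff_commute[of E1] Qdiff_commute[of F1] Qdiff_commute[of E2]
  Qdiff_commute[of F2] Qdiff_commute[of K1] Qdiff_commute[of K1i] Qdiff_commute[of K2]
  Qdiff_commute[of K2i] Qdiff_commute[of I] Qdiff_commute[of Q] Qdiff_commute[of Qi]

lemma scaled_forms:
  "(Q - Qi)^2 * (E1 + K1i * E2) * (F1 * K2 + F2)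
     = ((Q - Qi) * E1 + K1i * ((Q - Qi) * E2)) * ((Q - Qi) * F1 * K2 + (Q - Qi) * F2)"
  "Q * (Q - Qi)^2 * E1 * F2 * K2i = Q * ((Q - Qi) * E1) * ((Q - Qi) * F2) * K2i"
  "(Q - Qi)^2 * E1 * F1 = (Q - Qi) * E1 * ((Q - Qi) * F1)"
  "(Q - Qi)^2 * E2 * F2 = (Q - Qi) * E2 * ((Q - Qi) * F2)"
  by (simp_all only: power2_eq_square mult.assoc distrib_left distrib_right Qdiff_commutes add.assoc)

lemma scaled_commutator:
  assumes "E * F - F * E = Ai * H"
  shows "((Q - Qi) * E) * ((Q - Qi) * F) - ((Q - Qi) * F) * ((Q - Qi) * E) = (Q - Qi) * H"
proof -
  have "((Q - Qi) * E) * ((Q - Qi) * F) - ((Q - Qi) * F) * ((Q - Qi) * E)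
      = (Q - Qi) * ((Q - Qi) * (E * F - F * E))"
    by (simp only: mult.assoc Qdiff_commute[of E] Qdiff_commute[of F] right_diff_distrib)
  also have "\<dots> = (Q - Qi) * H" using QAi by (simp add: assms mult.assoc[symmetric])
  finally show ?thesis .
qed

lemma scaled:
  "wq_scaled ((Q - Qi) * E1) ((Q - Qi) * F1) ((Q - Qi) * E2) ((Q - Qi) * F2) K1 K1i K2 K2i I Q Qi"
proof (unfold_locales)
  show "((Q - Qi) * E1) * ((Q - Qi) * F1) - ((Q - Qi) * F1) * ((Q - Qi) * E1) = (Q - Qi) * (K1 - I * K1i)"
    by (rule scaled_commutator[OF EF1])
  show "((Q - Qi) * E2) * ((Q - Qi) * F2) - ((Q - Qi) * F2) * ((Q - Qi) * E2) = (Q - Qi) * (I * K2 - K2i)"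
    by (rule scaled_commutator[OF EF2])
qed (rule Qc | rule Qic | rule QQi | rule K1K1i | rule K1iK1 | rule K2K2i | rule K2iK2 | rule K1K2 |
     simp only: mult.assoc Qdiff_commutes IE1 IF1 IE2 IF2 IK1 IK1i IK2 IK2i K1E2 K1F2 K2E1 K2F1
       E1E2 E1F2 F1E2 F1F2 E1K1[simplified mult.assoc] K1F1[simplified mult.assoc]
       E2K2[simplified mult.assoc] K2F2[simplified mult.assoc])+

end

section \<open>The free algebra and its universal property\<close>

lemma cst_add: "cst (a + b) = cst a + cst b" by (simp add: cst_def single_add)
lemma cst_mult: "cst (a * b) = cst a * cst b" by (simp add: cst_def mult_single)
lemma cst_one: "cst 1 = 1" by (simp add: cst_def)
lemma cst_zero: "cst 0 = 0" by (simp add: cst_def)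
lemma cst_diff: "cst (a - b) = cst a - cst b" by (simp add: cst_def single_diff)
lemma cst_power: "cst (a ^ n) = cst a ^ n" by (induct n) (simp_all add: cst_one cst_mult)

lemma poly_mapping_single_induct:
  assumes "P 0" and "\<And>w c f. P f \<Longrightarrow> P (Poly_Mapping.single w c + f)"
  shows "P x"
proof (induct x rule: update_induct)
  case const then show ?case using assms(1) .
next
  case (update f a b)
  have "Poly_Mapping.update a b f = Poly_Mapping.single a b + f"
    using update(1)
    by (intro poly_mapping_eqI)
       (auto simp: Poly_Mapping.lookup_update lookup_add lookup_single in_keys_iff when_def)
  then show ?case using assms(2) update by simp
qed

lemma cst_central: "cst c * x = x * cst c"
proof (induct x rule: poly_mapping_single_induct)
  case (2 w d f)
  have "cst c * Poly_Mapping.single w d = Poly_Mapping.single w d * cst c"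
    by (simp add: cst_def mult_single mult.commute)
  with 2 show ?case by (simp add: distrib_left distrib_right)
qed simp

fun word_eval :: "('g \<Rightarrow> 'h freealg) \<Rightarrow> 'g word \<Rightarrow> 'h freealg" where
  "word_eval g (Word ws) = prod_list (map g ws)"

lemma word_eval_plus: "word_eval g (a + b) = word_eval g a * word_eval g b"
  by (cases a; cases b) simp

lemma word_eval_zero: "word_eval g 0 = 1" by (simp add: zero_word_def)

definition free_eval :: "('g \<Rightarrow> 'h freealg) \<Rightarrow> 'g freealg \<Rightarrow> 'h freealg" where
  "free_eval g x = (\<Sum>w\<in>Poly_Mapping.keys x. cst (Poly_Mapping.lookup x w) * word_eval g w)"

lemma free_eval_superset:
  assumes "finite S" "Poly_Mapping.keys x \<subseteq> S"
  shows "free_eval g x = (\<Sum>w\<in>S. cst (Poly_Mapping.lookup x w) * word_eval g w)"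
  unfolding free_eval_def
  by (rule sum.mono_neutral_left) (use assms in \<open>auto simp: in_keys_iff cst_zero\<close>)

lemma free_eval_add: "free_eval g (x + y) = free_eval g x + free_eval g y"
proof -
  let ?S = "Poly_Mapping.keys x \<union> Poly_Mapping.keys y"
  let ?sum = "\<lambda>z. \<Sum>w\<in>?S. cst (Poly_Mapping.lookup z w) * word_eval g w"
  have "free_eval g (x + y) = ?sum (x + y)"
    by (rule free_eval_superset) (auto simp: keys_add)
  also have "\<dots> = ?sum x + ?sum y"
    by (simp add: lookup_add cst_add distrib_right sum.distrib)
  also have "\<dots> = free_eval g x + free_eval g y"
    by (simp add: free_eval_superset[symmetric])
  finally show ?thesis .
qed

lemma free_eval_zero: "free_eval g 0 = 0" by (simp add: free_eval_def)

lemma free_eval_single: "free_eval g (Poly_Mapping.single w c) = cst c * word_eval g w"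
  by (subst free_eval_superset[of "{w}"]) (auto simp: lookup_single)

lemma free_eval_mult_single:
  "free_eval g (Poly_Mapping.single w c * y) = cst c * word_eval g w * free_eval g y"
proof (induct y rule: poly_mapping_single_induct)
  case (2 v d f)
  have "cst d * (word_eval g w * word_eval g v) = word_eval g w * (cst d * word_eval g v)"
    by (metis cst_central mult.assoc)
  with 2 show ?case
    by (simp add: distrib_left free_eval_add mult_single free_eval_single cst_mult
        word_eval_plus mult.assoc)
qed (simp add: free_eval_zero)

lemma free_eval_mult: "free_eval g (x * y) = free_eval g x * free_eval g y"
  by (induct x rule: poly_mapping_single_induct)
     (simp_all add: free_eval_zero free_eval_add distrib_right free_eval_mult_single free_eval_single)

lemma free_eval_one: "free_eval g 1 = 1"
  using free_eval_single[of g 0 1] by (simp add: cst_one word_eval_zero)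

lemma free_eval_uminus: "free_eval g (- x) = - free_eval g x"
  by (metis add.right_inverse free_eval_add free_eval_zero minus_unique)

lemma free_eval_diff: "free_eval g (x - y) = free_eval g x - free_eval g y"
  using free_eval_add[of g x "- y"] by (simp add: free_eval_uminus)

lemma free_eval_cst: "free_eval g (cst c) = cst c"
  by (simp add: cst_def free_eval_single[unfolded cst_def] word_eval_zero)

lemma free_eval_gen: "free_eval g (gen a) = g a"
  by (simp add: gen_def free_eval_single cst_one)

lemma free_eval_qcomm: "free_eval g (qcomm q x y) = qcomm q (free_eval g x) (free_eval g y)"
  by (simp add: qcomm_def free_eval_diff free_eval_mult free_eval_cst)

lemma free_eval_comm: "free_eval g (comm x y) = comm (free_eval g x) (free_eval g y)"
  by (simp add: comm_def free_eval_diff free_eval_mult)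

lemmas free_eval_simps = free_eval_add free_eval_mult free_eval_one free_eval_uminus
  free_eval_diff free_eval_cst free_eval_gen free_eval_qcomm free_eval_comm free_eval_zero

section \<open>Quotients of the free algebra\<close>

lemma ring_FreeRing: "ring (FreeRing :: 'g freealg ring)"
proof -
  have "\<exists>y. x + y = 0" for x :: "'g freealg"
    using add.right_inverse by blast
  then show ?thesis
    unfolding FreeRing_def by unfold_locales (auto simp: algebra_simps Units_def)
qed

lemma FreeRing_simps [simp]: "carrier FreeRing = UNIV" "mult FreeRing = (*)" "add FreeRing = (+)"
  "one FreeRing = 1" "zero FreeRing = 0"
  by (simp_all add: FreeRing_def)

lemma FreeRing_a_inv [simp]: "a_inv FreeRing x = - x"
  using abelian_group.minus_equality[OF ring.is_abelian_group[OF ring_FreeRing], of "- x" x] by simp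

lemma ideal_genideal_FreeRing: "ideal (genideal FreeRing S) FreeRing"
  by (rule ring.genideal_ideal[OF ring_FreeRing]) simp

lemma genideal_FreeRing_self: "r \<in> S \<Longrightarrow> r \<in> genideal FreeRing S"
  using ring.genideal_self[OF ring_FreeRing, of S] by auto

lemma genideal_FreeRing_zero: "0 \<in> genideal FreeRing S"
  using additive_subgroup.zero_closed[OF ideal.axioms(1)[OF ideal_genideal_FreeRing]] by simp

lemma genideal_FreeRing_add:
  "a \<in> genideal FreeRing S \<Longrightarrow> b \<in> genideal FreeRing S \<Longrightarrow> a + b \<in> genideal FreeRing S"
  using additive_subgroup.a_closed[OF ideal.axioms(1)[OF ideal_genideal_FreeRing]] by fastforce

lemma genideal_FreeRing_lmult: "a \<in> genideal FreeRing S \<Longrightarrow> x * a \<in> genideal FreeRing S"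
  using ideal.I_l_closed[OF ideal_genideal_FreeRing] by fastforce

lemma genideal_FreeRing_rmult: "a \<in> genideal FreeRing S \<Longrightarrow> a * x \<in> genideal FreeRing S"
  using ideal.I_r_closed[OF ideal_genideal_FreeRing] by fastforce

lemma genideal_FreeRing_uminus: "a \<in> genideal FreeRing S \<Longrightarrow> - a \<in> genideal FreeRing S"
  using genideal_FreeRing_lmult[of a S "- 1"] by simp

lemma genideal_FreeRing_diff:
  "a \<in> genideal FreeRing S \<Longrightarrow> b \<in> genideal FreeRing S \<Longrightarrow> a - b \<in> genideal FreeRing S"
  using genideal_FreeRing_add[of a S "- b"] genideal_FreeRing_uminus[of b S] by simp

abbreviation coset :: "'g freealg set \<Rightarrow> 'g freealg \<Rightarrow> 'g freealg set" where
  "coset S \<equiv> a_r_coset FreeRing (genideal FreeRing S)"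

lemma coset_eq_iff: "coset S x = coset S y \<longleftrightarrow> x - y \<in> genideal FreeRing S"
  using ring.quotient_eq_iff_same_a_r_cos[OF ring_FreeRing ideal_genideal_FreeRing, of x y S]
  by (simp add: a_minus_def)

lemma carrier_FreeRing_Quot: "carrier (FreeRing Quot (genideal FreeRing S)) = range (coset S)"
  by (auto simp: FactRing_def A_RCOSETS_def' a_r_coset_def)

lemma coset_hom: "coset S \<in> ring_hom FreeRing (FreeRing Quot (genideal FreeRing S))"
  using ideal.rcos_ring_hom[OF ideal_genideal_FreeRing] by (simp add: a_r_coset_def)

lemma coset_mult: "coset S x \<otimes>\<^bsub>FreeRing Quot (genideal FreeRing S)\<^esub> coset S y = coset S (x * y)"
  using ring_hom_mult[OF coset_hom, of x y] by simp

lemma coset_add: "coset S x \<oplus>\<^bsub>FreeRing Quot (genideal FreeRing S)\<^esub> coset S y = coset S (x + y)"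
  using ring_hom_add[OF coset_hom, of x y] by simp

lemma coset_one: "\<one>\<^bsub>FreeRing Quot (genideal FreeRing S)\<^esub> = coset S 1"
  using ring_hom_one[OF coset_hom, of S] by simp

lemma coset_zero: "\<zero>\<^bsub>FreeRing Quot (genideal FreeRing S)\<^esub> = coset S 0"
  using ring_hom_zero[OF coset_hom[of S] ring_FreeRing ideal.quotient_is_ring[OF ideal_genideal_FreeRing]]
  by simp

section \<open>Families over all generic parameters\<close>

definition generic_q :: "complex \<Rightarrow> bool" where
  "generic_q q \<longleftrightarrow> q \<noteq> 0 \<and> (\<forall>n::nat. n > 0 \<longrightarrow> q ^ n \<noteq> 1)"

abbreviation JW :: "complex \<Rightarrow> genW freealg set" where
  "JW q \<equiv> genideal FreeRing (relsW q)"

definition famrel :: "(complex \<Rightarrow> genW freealg) \<Rightarrow> (complex \<Rightarrow> genW freealg) \<Rightarrow> bool" where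
  "famrel f g \<longleftrightarrow> (\<forall>q. generic_q q \<longrightarrow> f q - g q \<in> JW q)"

lemma famrel_refl: "famrel f f"
  by (simp add: famrel_def genideal_FreeRing_zero)

lemma equivp_famrel: "equivp famrel"
proof (rule equivpI)
  show "reflp famrel" by (simp add: reflp_def famrel_refl)
  show "symp famrel"
    unfolding symp_def famrel_def using genideal_FreeRing_uminus by fastforce
  show "transp famrel"
    unfolding transp_def famrel_def using genideal_FreeRing_add by fastforce
qed

quotient_type wfam = "complex \<Rightarrow> genW freealg" / famrel
  by (rule equivp_famrel)

instantiation wfam :: "{ring, monoid_mult}"
begin

lift_definition zero_wfam :: wfam is "\<lambda>q. 0" .
lift_definition one_wfam :: wfam is "\<lambda>q. 1" .

lift_definition plus_wfam :: "wfam \<Rightarrow> wfam \<Rightarrow> wfam" is "\<lambda>f g q. f q + g q"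
  unfolding famrel_def using genideal_FreeRing_add by (fastforce simp: algebra_simps)

lift_definition uminus_wfam :: "wfam \<Rightarrow> wfam" is "\<lambda>f q. - f q"
  unfolding famrel_def using genideal_FreeRing_uminus by (fastforce simp: algebra_simps)

lift_definition minus_wfam :: "wfam \<Rightarrow> wfam \<Rightarrow> wfam" is "\<lambda>f g q. f q - g q"
  unfolding famrel_def using genideal_FreeRing_diff by (fastforce simp: algebra_simps)

lift_definition times_wfam :: "wfam \<Rightarrow> wfam \<Rightarrow> wfam" is "\<lambda>f g q. f q * g q"
proof -
  fix f f' g g' assume "famrel f f'" "famrel g g'"
  moreover have "f q * g q - f' q * g' q = (f q - f' q) * g q + f' q * (g q - g' q)" for q
    by (simp add: algebra_simps)
  ultimately show "famrel (\<lambda>q. f q * g q) (\<lambda>q. f' q * g' q)"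
    unfolding famrel_def
    by (metis genideal_FreeRing_add genideal_FreeRing_lmult genideal_FreeRing_rmult)
qed

instance
  by standard (transfer; simp add: algebra_simps famrel_refl)+

end

lemma abs_wfam_add: "abs_wfam (\<lambda>q. f q + g q) = abs_wfam f + abs_wfam g"
  by (simp add: plus_wfam.abs_eq famrel_refl)
lemma abs_wfam_mult: "abs_wfam (\<lambda>q. f q * g q) = abs_wfam f * abs_wfam g"
  by (simp add: times_wfam.abs_eq famrel_refl)
lemma abs_wfam_diff: "abs_wfam (\<lambda>q. f q - g q) = abs_wfam f - abs_wfam g"
  by (simp add: minus_wfam.abs_eq famrel_refl)
lemma abs_wfam_one: "abs_wfam (\<lambda>q. 1) = 1"
  by (simp add: one_wfam_def)
lemma abs_wfam_zero: "abs_wfam (\<lambda>q. 0) = 0"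
  by (simp add: zero_wfam_def)
lemma abs_wfam_power: "abs_wfam (\<lambda>q. f q ^ n) = abs_wfam f ^ n"
  by (induct n) (simp_all add: abs_wfam_one abs_wfam_mult)

lemma abs_wfam_eq_iff: "abs_wfam f = abs_wfam g \<longleftrightarrow> (\<forall>q. generic_q q \<longrightarrow> clsW q (f q) = clsW q (g q))"
  by (simp add: wfam.abs_eq_iff famrel_def clsW_def coset_eq_iff)

lemma abs_wfam_eqI: "(\<And>q. generic_q q \<Longrightarrow> f q = g q) \<Longrightarrow> abs_wfam f = abs_wfam g"
  by (simp add: abs_wfam_eq_iff)

lemma abs_wfam_zeroD: "abs_wfam f = 0 \<Longrightarrow> generic_q q \<Longrightarrow> f q \<in> JW q"
  unfolding abs_wfam_zero[symmetric] wfam.abs_eq_iff famrel_def by simp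

lemma abs_wfam_relation: "(\<And>q. f q - g q \<in> relsW q) \<Longrightarrow> abs_wfam f = abs_wfam g"
  by (simp add: wfam.abs_eq_iff famrel_def genideal_FreeRing_self)

definition wgen :: "genW \<Rightarrow> wfam" where "wgen x = abs_wfam (\<lambda>q. gen x)"
definition scalar :: "(complex \<Rightarrow> complex) \<Rightarrow> wfam" where "scalar c = abs_wfam (\<lambda>q. cst (c q))"

abbreviation "q_fam \<equiv> scalar (\<lambda>q. q)"
abbreviation "qinv_fam \<equiv> scalar inverse"

lemma scalar_central: "scalar c * x = x * scalar c"
proof (induct x rule: wfam.abs_induct)
  case (1 f)
  show ?case
    unfolding scalar_def abs_wfam_mult[symmetric] by (simp add: cst_central)
qed

lemma scalar_one: "(\<And>q. generic_q q \<Longrightarrow> c q = 1) \<Longrightarrow> scalar c = 1"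
  unfolding scalar_def abs_wfam_one[symmetric] by (rule abs_wfam_eqI) (simp add: cst_one)

lemma scalar_mult: "scalar c * scalar d = scalar (\<lambda>q. c q * d q)"
  by (simp add: scalar_def abs_wfam_mult[symmetric] cst_mult)
lemma scalar_diff: "scalar c - scalar d = scalar (\<lambda>q. c q - d q)"
  by (simp add: scalar_def abs_wfam_diff[symmetric] cst_diff)
lemma scalar_add: "scalar c + scalar d = scalar (\<lambda>q. c q + d q)"
  by (simp add: scalar_def abs_wfam_add[symmetric] cst_add)

lemmas abs_wfam_simps = abs_wfam_add abs_wfam_mult abs_wfam_diff abs_wfam_one
  abs_wfam_zero abs_wfam_power wgen_def[symmetric] scalar_def[symmetric]
  cst_add cst_mult cst_diff cst_power cst_one cst_zero

lemma generic_q_nonzero: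
  assumes "generic_q q"
  shows "q \<noteq> 0" "q - inverse q \<noteq> 0" "q^2 - inverse (q^2) \<noteq> 0"
proof -
  have q0: "q \<noteq> 0" and q2: "q^2 \<noteq> 1" and q4: "q^4 \<noteq> 1"
    using assms by (auto simp: generic_q_def)
  show "q \<noteq> 0" by fact
  show "q - inverse q \<noteq> 0"
  proof
    assume "q - inverse q = 0"
    then have "q^2 = 1" using q0 by (simp add: field_simps power2_eq_square)
    then show False using q2 by simp
  qed
  show "q^2 - inverse (q^2) \<noteq> 0"
  proof
    assume "q^2 - inverse (q^2) = 0"
    then have "q^2 * q^2 = 1" using q0 by (simp add: field_simps)
    then have "q^4 = 1" by (simp add: power_add[symmetric])
    then show False using q4 by simp
  qed
qed

interpretation W: wq "wgen E1" "wgen F1" "wgen E2" "wgen F2" "wgen K1" "wgen K1i" "wgen K2" "wgen K2i"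
  "wgen II" q_fam qinv_fam "scalar (\<lambda>q. inverse (q - inverse q))"
proof (unfold_locales)
  show "x * q_fam = q_fam * x" "x * qinv_fam = qinv_fam * x" for x
    by (simp_all add: scalar_central)
  show "q_fam * qinv_fam = 1"
    unfolding scalar_mult by (rule scalar_one) (simp add: generic_q_nonzero)
  show "(q_fam - qinv_fam) * scalar (\<lambda>q. inverse (q - inverse q)) = 1"
    unfolding scalar_mult scalar_diff
    by (rule scalar_one) (rule right_inverse, erule generic_q_nonzero(2))
qed (unfold wgen_def scalar_def abs_wfam_mult[symmetric] abs_wfam_diff[symmetric] abs_wfam_one[symmetric],
     (rule abs_wfam_relation, simp only: relsW_def comm_def qcomm_def, blast)+)

interpretation WS: wq_scaled "(q_fam - qinv_fam) * wgen E1" "(q_fam - qinv_fam) * wgen F1"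
  "(q_fam - qinv_fam) * wgen E2" "(q_fam - qinv_fam) * wgen F2"
  "wgen K1" "wgen K1i" "wgen K2" "wgen K2i" "wgen II" q_fam qinv_fam
  by (rule W.scaled)

section \<open>The homomorphism \<open>\<H>\<^sub>q \<rightarrow> \<W>\<^sub>q\<close>\<close>

definition hahn_img :: "complex \<Rightarrow> genH \<Rightarrow> genW freealg" where
  "hahn_img q x = (case x of
      GA \<Rightarrow> gen K2i
    | GB \<Rightarrow> cst ((q - inverse q)^2) * (gen E1 + gen K1i * gen E2) * (gen F1 * gen K2 + gen F2)
            + cst (inverse q) * gen K1 * gen K2 + cst q * gen K1i * gen K2i
    | GC \<Rightarrow> gen II * gen K1i - cst (q * (q - inverse q)^2) * gen E1 * gen F2 * gen K2i)"

lemma abs_wfam_hahn_img: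
  "abs_wfam (\<lambda>q. hahn_img q GA) = WS.imgA"
  "abs_wfam (\<lambda>q. hahn_img q GB) = WS.imgB"
  "abs_wfam (\<lambda>q. hahn_img q GC) = WS.imgC"
  by (simp_all add: hahn_img_def abs_wfam_simps WS.imgA_def WS.imgB_def WS.imgC_def W.scaled_forms)

lemma abs_wfam_hahn_img_mem: "abs_wfam (\<lambda>q. hahn_img q Y) \<in> {WS.imgA, WS.imgB, WS.imgC}"
  by (cases Y) (simp_all add: abs_wfam_hahn_img)

lemma abs_wfam_Lambda:
  "abs_wfam Lambda1 = WS.Lam1" "abs_wfam Lambda2 = WS.Lam2"
  by (simp_all add: Lambda1_def[abs_def] Lambda2_def[abs_def] abs_wfam_simps
      WS.Lam1_def WS.Lam2_def W.scaled_forms)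

lemma hahn_scalar_unit:
  "scalar (\<lambda>q. inverse (q^2 - inverse (q^2))) * ((q_fam - qinv_fam) * (q_fam + qinv_fam)) = 1"
  unfolding scalar_mult scalar_diff scalar_add
proof (rule scalar_one)
  fix q :: complex assume q: "generic_q q"
  have "(q - inverse q) * (q + inverse q) = q^2 - inverse (q^2)"
    by (simp add: algebra_simps power2_eq_square power_inverse)
  then show "inverse (q^2 - inverse (q^2)) * ((q - inverse q) * (q + inverse q)) = 1"
    using generic_q_nonzero(3)[OF q] by simp
qed

lemma qdiff_scalar_unit: "scalar (\<lambda>q. inverse (q - inverse q)) * (q_fam - qinv_fam) = 1"
  using W.QAi by (simp add: scalar_central)

lemma hahn_relations_preserved:
  assumes "generic_q q"
  shows "free_eval (hahn_img q) (comm (cst (inverse (q^2 - inverse (q^2)))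
           * qcomm q (gen GB) (gen GC) + gen GA) (gen Y)) \<in> JW q"
    and "free_eval (hahn_img q) (comm (qcomm q (gen GC) (gen GA)) (gen Y)) \<in> JW q"
    and "free_eval (hahn_img q) (comm (cst (inverse (q^2 - inverse (q^2)))
           * qcomm q (gen GA) (gen GB) + gen GC) (gen Y)) \<in> JW q"
  using WS.hahn_relations[OF scalar_central hahn_scalar_unit abs_wfam_hahn_img_mem[of Y]]
  by (auto simp: free_eval_simps comm_def qcomm_def abs_wfam_simps abs_wfam_hahn_img
      intro!: abs_wfam_zeroD[OF _ assms])

lemma free_eval_relsH:
  assumes "generic_q q" "r \<in> relsH q"
  shows "free_eval (hahn_img q) r \<in> JW q"
  using assms(2) hahn_relations_preserved[OF assms(1)] by (auto simp: relsH_def)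

lemma free_eval_ring_hom: "ring_hom_ring FreeRing FreeRing (free_eval g)"
  by (intro ring_hom_ring.intro ring_hom_ring_axioms.intro ring_FreeRing ring_hom_memI)
     (simp_all add: free_eval_mult free_eval_add free_eval_one)

lemma free_eval_genideal_relsH:
  assumes "generic_q q" "x \<in> genideal FreeRing (relsH q)"
  shows "free_eval (hahn_img q) x \<in> JW q"
proof -
  have "genideal FreeRing (relsH q) \<subseteq> {r \<in> carrier FreeRing. free_eval (hahn_img q) r \<in> JW q}"
    by (rule ring.genideal_minimal[OF ring_FreeRing
          ring_hom_ring.ideal_vimage[OF free_eval_ring_hom ideal_genideal_FreeRing]])
       (use free_eval_relsH[OF assms(1)] in auto)
  with assms(2) show ?thesis by auto
qed

lemma hahn_central_images:
  assumes "generic_q q"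
  shows "clsW q (free_eval (hahn_img q) (alphaH q)) = clsW q (Lambda2 q + Lambda1 q * gen K1i * gen K2i)"
    and "clsW q (free_eval (hahn_img q) (betaH q)) = clsW q (gen II * gen K1i * gen K2i)"
    and "clsW q (free_eval (hahn_img q) (gammaH q)) = clsW q (Lambda1 q + Lambda2 q * gen K1i * gen K2i)"
proof -
  have "abs_wfam (\<lambda>q. free_eval (hahn_img q) (alphaH q))
          = abs_wfam (\<lambda>q. Lambda2 q + Lambda1 q * gen K1i * gen K2i)"
   and "abs_wfam (\<lambda>q. free_eval (hahn_img q) (betaH q)) = abs_wfam (\<lambda>q. gen II * gen K1i * gen K2i)"
   and "abs_wfam (\<lambda>q. free_eval (hahn_img q) (gammaH q))
          = abs_wfam (\<lambda>q. Lambda1 q + Lambda2 q * gen K1i * gen K2i)"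
    using WS.central_images[OF qdiff_scalar_unit]
    by (simp_all add: free_eval_simps alphaH_def betaH_def gammaH_def qcomm_def abs_wfam_simps
        abs_wfam_hahn_img abs_wfam_Lambda WS.img_alpha_def WS.img_beta_def WS.img_gamma_def)
  then show "clsW q (free_eval (hahn_img q) (alphaH q)) = clsW q (Lambda2 q + Lambda1 q * gen K1i * gen K2i)"
    and "clsW q (free_eval (hahn_img q) (betaH q)) = clsW q (gen II * gen K1i * gen K2i)"
    and "clsW q (free_eval (hahn_img q) (gammaH q)) = clsW q (Lambda1 q + Lambda2 q * gen K1i * gen K2i)"
    using assms by (simp_all add: abs_wfam_eq_iff)
qed

lemma carrier_Hq: "carrier (Hq q) = range (clsH q)"
  by (simp add: Hq_def clsH_def carrier_FreeRing_Quot)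

lemma carrier_Wq: "carrier (Wq q) = range (clsW q)"
  by (simp add: Wq_def clsW_def carrier_FreeRing_Quot)

lemma ring_Hq: "ring (Hq q)"
  by (simp add: Hq_def ideal.quotient_is_ring[OF ideal_genideal_FreeRing])

lemma ring_Wq: "ring (Wq q)"
  by (simp add: Wq_def ideal.quotient_is_ring[OF ideal_genideal_FreeRing])

lemma Hq_ops:
  "clsH q x \<otimes>\<^bsub>Hq q\<^esub> clsH q y = clsH q (x * y)" "clsH q x \<oplus>\<^bsub>Hq q\<^esub> clsH q y = clsH q (x + y)"
  "\<one>\<^bsub>Hq q\<^esub> = clsH q 1" "\<zero>\<^bsub>Hq q\<^esub> = clsH q 0"
  by (simp_all add: Hq_def clsH_def coset_mult coset_add coset_one coset_zero)

lemma Wq_ops: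
  "clsW q x \<otimes>\<^bsub>Wq q\<^esub> clsW q y = clsW q (x * y)" "clsW q x \<oplus>\<^bsub>Wq q\<^esub> clsW q y = clsW q (x + y)"
  "\<one>\<^bsub>Wq q\<^esub> = clsW q 1" "\<zero>\<^bsub>Wq q\<^esub> = clsW q 0"
  by (simp_all add: Wq_def clsW_def coset_mult coset_add coset_one coset_zero)

lemma clsW_free_eval_cong:
  assumes "generic_q q" "clsH q x = clsH q y"
  shows "clsW q (free_eval (hahn_img q) x) = clsW q (free_eval (hahn_img q) y)"
  using free_eval_genideal_relsH[OF assms(1), of "x - y"] assms(2)
  by (simp add: clsH_def clsW_def coset_eq_iff free_eval_diff)

definition hahn_hom :: "complex \<Rightarrow> genH freealg set \<Rightarrow> genW freealg set" where
  "hahn_hom q X = clsW q (free_eval (hahn_img q) (SOME x. X = clsH q x))"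

lemma hahn_hom_clsH:
  assumes "generic_q q"
  shows "hahn_hom q (clsH q x) = clsW q (free_eval (hahn_img q) x)"
  unfolding hahn_hom_def
  by (rule clsW_free_eval_cong[OF assms, symmetric]) (rule someI[of "\<lambda>y. clsH q x = clsH q y"], rule refl)

lemma hahn_hom_ring_hom:
  assumes "generic_q q"
  shows "hahn_hom q \<in> ring_hom (Hq q) (Wq q)"
  by (rule ring_hom_memI)
     (auto simp: carrier_Hq carrier_Wq Hq_ops Wq_ops hahn_hom_clsH[OF assms] free_eval_mult free_eval_add
       free_eval_one)

lemma ring_hom_Hq_determined:
  assumes hom: "f \<in> ring_hom (Hq q) (Wq q)"
    and scalars: "\<And>c. f (clsH q (cst c)) = clsW q (cst c)"
    and gens: "\<And>Y. f (clsH q (gen Y)) = clsW q (g Y)"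
  shows "f (clsH q x) = clsW q (free_eval g x)"
proof -
  have f_mult: "f (clsH q (x * y)) = f (clsH q x) \<otimes>\<^bsub>Wq q\<^esub> f (clsH q y)"
   and f_add: "f (clsH q (x + y)) = f (clsH q x) \<oplus>\<^bsub>Wq q\<^esub> f (clsH q y)" for x y
    using ring_hom_mult[OF hom] ring_hom_add[OF hom] by (simp_all add: carrier_Hq Hq_ops[symmetric])
  have single: "f (clsH q (Poly_Mapping.single (Word ws) c)) = clsW q (free_eval g (Poly_Mapping.single (Word ws) c))"
    for ws c
  proof (induct ws)
    case Nil
    then show ?case using scalars[of c] by (simp add: cst_def zero_word_def free_eval_single word_eval_zero)
  next
    case (Cons a ws)
    have "Poly_Mapping.single (Word (a # ws)) c = gen a * Poly_Mapping.single (Word ws) c"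
      by (simp add: gen_def mult_single)
    with Cons show ?case by (simp add: f_mult gens Wq_ops free_eval_mult free_eval_gen)
  qed
  show ?thesis
  proof (induct x rule: poly_mapping_single_induct)
    case 1
    show ?case using ring_hom_zero[OF hom ring_Hq ring_Wq] by (simp add: Hq_ops Wq_ops free_eval_zero)
  next
    case (2 w c h)
    then show ?case by (cases w) (simp add: f_add single Wq_ops free_eval_add)
  qed
qed

theorem mainTheorem5:
  fixes q :: complex
  assumes "q \<noteq> 0" and "\<forall>n::nat. n > 0 \<longrightarrow> q ^ n \<noteq> 1"
  defines "P \<equiv> (\<lambda>f. alg_hom_HW q f
      \<and> f (clsH q (gen GA)) = clsW q (gen K2i)
      \<and> f (clsH q (gen GB)) = clsW q
           (cst ((q - inverse q)^2) * (gen E1 + gen K1i * gen E2) * (gen F1 * gen K2 + gen F2)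
            + cst (inverse q) * gen K1 * gen K2 + cst q * gen K1i * gen K2i)
      \<and> f (clsH q (gen GC)) = clsW q
           (gen II * gen K1i - cst (q * (q - inverse q)^2) * gen E1 * gen F2 * gen K2i))"
  shows "(\<exists>f. P f)
       \<and> (\<forall>f g. P f \<longrightarrow> P g \<longrightarrow> (\<forall>x\<in>carrier (Hq q). f x = g x))
       \<and> (\<forall>f. P f \<longrightarrow>
            f (clsH q (alphaH q)) = clsW q (Lambda2 q + Lambda1 q * gen K1i * gen K2i)
          \<and> f (clsH q (betaH q)) = clsW q (gen II * gen K1i * gen K2i)
          \<and> f (clsH q (gammaH q)) = clsW q (Lambda1 q + Lambda2 q * gen K1i * gen K2i))"
proof -
  have q: "generic_q q" using assms(1,2) by (simp add: generic_q_def)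
  have formula: "f (clsH q x) = clsW q (free_eval (hahn_img q) x)" if "P f" for f x
  proof (rule ring_hom_Hq_determined)
    show "f (clsH q (gen Y)) = clsW q (hahn_img q Y)" for Y
      using that unfolding P_def by (cases Y) (simp_all add: hahn_img_def)
  qed (use that in \<open>simp_all add: P_def alg_hom_HW_def\<close>)
  have "P (hahn_hom q)"
    unfolding P_def alg_hom_HW_def
    by (simp add: hahn_hom_ring_hom[OF q] hahn_hom_clsH[OF q] free_eval_cst free_eval_gen hahn_img_def)
  moreover have "\<forall>f g. P f \<longrightarrow> P g \<longrightarrow> (\<forall>x\<in>carrier (Hq q). f x = g x)"
    by (auto simp: carrier_Hq formula)
  ultimately show ?thesis by (auto simp: formula hahn_central_images[OF q])
qed

end
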